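(* Let $n\ge 2$ and let $G$ be a tree on $n$ vertices. Then $\mathrm{irr}_t(G)\ge 2n-4$, with equality if and only if $G\cong P_n$.
   Context: For a graph $G=(V,E)$ and $w\in V$, $d_G(w)$ is the degree of $w$. The total irregularity is $\mathrm{irr}_t(G)=\frac12\sum_{x,y\in V}|d_G(x)-d_G(y)|$, where the sum runs over all ordered pairs of vertices. $P_n$ denotes the path on $n$ vertices. *)

theory Defs
  imports Complex_Main
begin

definition simple_graph :: "'a set \<Rightarrow> 'a set set \<Rightarrow> bool" where
  "simple_graph V E \<longleftrightarrow> finite V \<and> (\<forall>e\<in>E. e \<subseteq> V \<and> card e = 2)"

definition degree :: "'a set set \<Rightarrow> 'a \<Rightarrow> nat" where
  "degree E w = card {e\<in>E. w \<in> e}"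

definition is_walk :: "'a set \<Rightarrow> 'a set set \<Rightarrow> 'a list \<Rightarrow> bool" where
  "is_walk V E xs \<longleftrightarrow> xs \<noteq> [] \<and> set xs \<subseteq> V \<and>
     (\<forall>i. Suc i < length xs \<longrightarrow> {xs ! i, xs ! Suc i} \<in> E)"

definition connected_graph :: "'a set \<Rightarrow> 'a set set \<Rightarrow> bool" where
  "connected_graph V E \<longleftrightarrow>
     (\<forall>x\<in>V. \<forall>y\<in>V. \<exists>xs. is_walk V E xs \<and> hd xs = x \<and> last xs = y)"

definition has_cycle :: "'a set \<Rightarrow> 'a set set \<Rightarrow> bool" where
  "has_cycle V E \<longleftrightarrow>
     (\<exists>xs. length xs \<ge> 3 \<and> distinct xs \<and> is_walk V E xs \<and> {last xs, hd xs} \<in> E)"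

definition is_tree :: "'a set \<Rightarrow> 'a set set \<Rightarrow> bool" where
  "is_tree V E \<longleftrightarrow> simple_graph V E \<and> V \<noteq> {} \<and> connected_graph V E \<and> \<not> has_cycle V E"

definition irr_t :: "'a set \<Rightarrow> 'a set set \<Rightarrow> real" where
  "irr_t V E = (1/2) * (\<Sum>x\<in>V. \<Sum>y\<in>V. \<bar>real (degree E x) - real (degree E y)\<bar>)"

definition path_V :: "nat \<Rightarrow> nat set" where
  "path_V n = {0..<n}"

definition path_E :: "nat \<Rightarrow> nat set set" where
  "path_E n = {{i, Suc i} | i. Suc i < n}"

definition graph_iso :: "'a set \<Rightarrow> 'a set set \<Rightarrow> 'b set \<Rightarrow> 'b set set \<Rightarrow> bool" where
  "graph_iso V E V' E' \<longleftrightarrow>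
     (\<exists>f. bij_betw f V V' \<and> (\<forall>x\<in>V. \<forall>y\<in>V. {x, y} \<in> E \<longleftrightarrow> {f x, f y} \<in> E'))"

end

theory Submission
  imports Defs
begin

text \<open>
  In a tree on \<open>n \<ge> 2\<close> vertices every degree is at least 1 and the degrees sum to \<open>2n - 2\<close>,
  so \<open>\<Sum>(d(v) - 1) = n - 2\<close>; in particular there are at least two leaves. Every pair of a leaf
  and a vertex \<open>w\<close> contributes \<open>d(w) - 1\<close> to the total irregularity, hence
  \<open>irr\<^sub>t = |leaves| (n - 2) + (sum over pairs of non-leaves) \<ge> 2(n - 2)\<close>.
  Equality forces exactly two leaves and all other degrees equal to 2, i.e. maximum degree 2,
  and a connected graph of maximum degree 2 whose longest path ends in leaves is that path.
\<close>


section \<open>Walks and neighbourhoods\<close>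

lemma is_walk_singleton [simp]: "is_walk V E [a] \<longleftrightarrow> a \<in> V"
  by (auto simp: is_walk_def)

lemma is_walk_Cons_Cons [simp]:
  "is_walk V E (a # b # xs) \<longleftrightarrow> a \<in> V \<and> {a, b} \<in> E \<and> is_walk V E (b # xs)"
  by (auto simp: is_walk_def nth_Cons split: nat.splits)

lemma is_walk_append:
  assumes "xs \<noteq> []" and "ys \<noteq> []"
  shows "is_walk V E (xs @ ys) \<longleftrightarrow> is_walk V E xs \<and> is_walk V E ys \<and> {last xs, hd ys} \<in> E"
  using assms
proof (induction xs rule: induct_list012)
  case (2 x)
  then show ?case by (cases ys) auto
qed auto

lemma is_walk_rev [simp]: "is_walk V E (rev xs) \<longleftrightarrow> is_walk V E xs"
proof (induction xs rule: induct_list012)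
  case (3 x y zs)
  then show ?case
    using is_walk_append[of "rev zs @ [y]" "[x]" V E] by (auto simp: insert_commute)
qed (auto simp: is_walk_def)

lemma is_walk_mono: "is_walk V E xs \<Longrightarrow> V \<subseteq> V' \<Longrightarrow> E \<subseteq> E' \<Longrightarrow> is_walk V' E' xs"
  by (auto simp: is_walk_def)

lemma is_walk_nth_edge: "is_walk V E xs \<Longrightarrow> Suc i < length xs \<Longrightarrow> {xs ! i, xs ! Suc i} \<in> E"
  by (simp add: is_walk_def)

definition neighbours :: "'a set set \<Rightarrow> 'a \<Rightarrow> 'a set" where
  "neighbours E x = {y. {x, y} \<in> E}"

lemma simple_graph_finite_edges: "simple_graph V E \<Longrightarrow> finite E"
  unfolding simple_graph_def by (meson Pow_iff finite_Pow_iff rev_finite_subset subsetI)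

lemma simple_graph_edgeE:
  assumes "simple_graph V E" and "e \<in> E"
  obtains a b where "e = {a, b}" and "a \<noteq> b" and "a \<in> V" and "b \<in> V"
proof -
  have "e \<subseteq> V" and "card e = 2" using assms unfolding simple_graph_def by auto
  then show thesis using that unfolding card_2_iff by blast
qed

lemma simple_graph_edge_ends: "simple_graph V E \<Longrightarrow> {a, b} \<in> E \<Longrightarrow> a \<noteq> b \<and> a \<in> V \<and> b \<in> V"
  unfolding simple_graph_def by (cases "a = b") auto

lemma neighbours_subset: "simple_graph V E \<Longrightarrow> neighbours E x \<subseteq> V"
  unfolding neighbours_def by (auto dest: simple_graph_edge_ends)

lemma finite_neighbours:
  assumes "simple_graph V E"
  shows "finite (neighbours E x)"
  using finite_subset[OF neighbours_subset[OF assms]] assms by (simp add: simple_graph_def)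

lemma edges_at_eq_image_neighbours:
  assumes "simple_graph V E"
  shows "{e\<in>E. x \<in> e} = (\<lambda>y. {x, y}) ` neighbours E x"
proof (intro equalityI subsetI)
  fix e assume "e \<in> {e\<in>E. x \<in> e}"
  then obtain a b where "e = {a, b}" "e \<in> E" "x \<in> e" using simple_graph_edgeE[OF assms] by blast
  then show "e \<in> (\<lambda>y. {x, y}) ` neighbours E x"
    unfolding neighbours_def by (auto simp: insert_commute)
qed (auto simp: neighbours_def)

lemma degree_eq_card_neighbours:
  assumes "simple_graph V E"
  shows "degree E x = card (neighbours E x)"
proof -
  have "inj_on (\<lambda>y. {x, y}) (neighbours E x)" by (auto simp: inj_on_def doubleton_eq_iff)
  then show ?thesis
    unfolding degree_def edges_at_eq_image_neighbours[OF assms] by (rule card_image)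
qed

lemma sum_degree_eq_twice_card_edges:
  assumes "simple_graph V E"
  shows "(\<Sum>v\<in>V. degree E v) = 2 * card E"
proof -
  have fin: "finite V" "finite E" using assms simple_graph_finite_edges by (auto simp: simple_graph_def)
  have "(\<Sum>v\<in>V. degree E v) = (\<Sum>v\<in>V. \<Sum>e\<in>E. if v \<in> e then 1 else 0)"
    unfolding degree_def using fin by (simp add: sum.inter_filter[symmetric])
  also have "\<dots> = (\<Sum>e\<in>E. \<Sum>v\<in>V. if v \<in> e then 1 else 0)" by (rule sum.swap)
  also have "\<dots> = (\<Sum>e\<in>E. card {v\<in>V. v \<in> e})"
    using fin by (simp add: sum.inter_filter[symmetric])
  also have "\<dots> = (\<Sum>e\<in>E. 2)"
  proof (rule sum.cong)
    fix e assume "e \<in> E"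
    then have "{v\<in>V. v \<in> e} = e" and "card e = 2" using assms by (auto simp: simple_graph_def)
    then show "card {v\<in>V. v \<in> e} = 2" by simp
  qed simp
  finally show ?thesis by simp
qed

section \<open>Paths and trees\<close>

definition is_path :: "'a set \<Rightarrow> 'a set set \<Rightarrow> 'a list \<Rightarrow> bool" where
  "is_path V E xs \<longleftrightarrow> distinct xs \<and> is_walk V E xs"

definition is_longest_path :: "'a set \<Rightarrow> 'a set set \<Rightarrow> 'a list \<Rightarrow> bool" where
  "is_longest_path V E xs \<longleftrightarrow> is_path V E xs \<and> (\<forall>ys. is_path V E ys \<longrightarrow> length ys \<le> length xs)"

lemma is_path_rev [simp]: "is_path V E (rev xs) \<longleftrightarrow> is_path V E xs"
  by (simp add: is_path_def)

lemma is_longest_path_rev [simp]: "is_longest_path V E (rev xs) \<longleftrightarrow> is_longest_path V E xs"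
  by (simp add: is_longest_path_def)

lemma length_path_le_card:
  assumes "finite V" and "is_path V E xs"
  shows "length xs \<le> card V"
proof -
  have "length xs = card (set xs)" using assms(2) by (simp add: is_path_def distinct_card)
  also have "\<dots> \<le> card V" using assms by (intro card_mono) (auto simp: is_path_def is_walk_def)
  finally show ?thesis .
qed

lemma longest_path_exists:
  assumes "finite V" and "a \<in> V"
  obtains xs where "is_longest_path V E xs"
proof -
  have "is_path V E [a]" using assms(2) by (simp add: is_path_def)
  moreover have "\<forall>ys. is_path V E ys \<longrightarrow> length ys < Suc (card V)"
    using length_path_le_card[OF assms(1)] by (simp add: less_Suc_eq_le)
  ultimately show thesis
    using ex_has_greatest_nat[of "is_path V E" "[a]" length] that
    unfolding is_longest_path_def by blast
qed

lemma longest_path_length_ge_2: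
  assumes "is_longest_path V E xs" and "{a, b} \<in> E" and "a \<noteq> b" and "a \<in> V" and "b \<in> V"
  shows "2 \<le> length xs"
proof -
  have "is_path V E [a, b]" using assms(2-5) by (simp add: is_path_def)
  then show ?thesis using assms(1) unfolding is_longest_path_def by fastforce
qed

lemma longest_path_start_neighbours:
  assumes "simple_graph V E" and "\<not> has_cycle V E" and "is_longest_path V E (x # y # zs)"
  shows "neighbours E x = {y}"
proof (intro equalityI subsetI)
  have walk: "is_walk V E (x # y # zs)" and dist: "distinct (x # y # zs)"
    using assms(3) by (auto simp: is_longest_path_def is_path_def)
  then show "y' \<in> neighbours E x" if "y' \<in> {y}" for y' using that by (simp add: neighbours_def)
  fix z assume "z \<in> neighbours E x"
  then have xz: "{x, z} \<in> E" by (simp add: neighbours_def)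
  then have "z \<noteq> x" "z \<in> V" using simple_graph_edge_ends[OF assms(1)] by auto
  show "z \<in> {y}"
  proof (rule ccontr)
    assume "z \<notin> {y}"
    show False
    proof (cases "z \<in> set zs")
      case False
      then have "is_path V E (z # x # y # zs)"
        using walk dist xz \<open>z \<noteq> x\<close> \<open>z \<in> V\<close> \<open>z \<notin> {y}\<close> by (auto simp: is_path_def insert_commute)
      then show False using assms(3) unfolding is_longest_path_def by fastforce
    next
      case True
      then obtain zs1 zs2 where zs: "zs = zs1 @ z # zs2" by (meson split_list)
      define cs where "cs = x # y # zs1 @ [z]"
      have "is_walk V E cs"
        using walk is_walk_append[of cs zs2 V E] by (cases "zs2 = []") (auto simp: zs cs_def)
      moreover have "distinct cs" using dist by (simp add: zs cs_def)
      moreover have "{last cs, hd cs} \<in> E" using xz by (simp add: cs_def insert_commute)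
      moreover have "3 \<le> length cs" by (simp add: cs_def)
      ultimately show False using assms(2) unfolding has_cycle_def by blast
    qed
  qed
qed

lemma is_walk_shortcut:
  assumes "is_walk V E (xs @ z # ys @ z # zs)"
  shows "is_walk V E (xs @ z # zs)"
proof -
  have "is_walk V E (z # zs)" using assms is_walk_append[of "xs @ z # ys" "z # zs"] by simp
  moreover have "xs \<noteq> [] \<Longrightarrow> is_walk V E xs \<and> {last xs, z} \<in> E"
    using assms is_walk_append[of xs "z # ys @ z # zs"] by simp
  ultimately show ?thesis by (cases "xs = []") (simp_all add: is_walk_append)
qed

lemma walk_to_path:
  assumes "is_walk V E ws"
  obtains ps where "is_path V E ps" and "hd ps = hd ws" and "last ps = last ws"
proof -
  let ?W = "\<lambda>ps. is_walk V E ps \<and> hd ps = hd ws \<and> last ps = last ws"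
  obtain ps where ps: "?W ps" and shortest: "\<And>qs. ?W qs \<Longrightarrow> length ps \<le> length qs"
    using ex_has_least_nat[of ?W ws length] assms by blast
  have "distinct ps"
  proof (rule ccontr)
    assume "\<not> distinct ps"
    then obtain xs ys zs z where ps_eq: "ps = xs @ [z] @ ys @ [z] @ zs"
      using not_distinct_decomp by blast
    have "?W (xs @ z # zs)"
      using ps is_walk_shortcut[of V E xs z ys zs] unfolding ps_eq
      by (cases xs; cases zs) auto
    then show False using shortest[of "xs @ z # zs"] by (simp add: ps_eq)
  qed
  then show thesis using that ps by (auto simp: is_path_def)
qed

lemma connected_remove_leaf:
  assumes "connected_graph V E" and "neighbours E x = {y}"
  shows "connected_graph (V - {x}) {e\<in>E. x \<notin> e}"
  unfolding connected_graph_def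
proof (intro ballI)
  fix u v assume u: "u \<in> V - {x}" and v: "v \<in> V - {x}"
  then obtain ws where "is_walk V E ws" "hd ws = u" "last ws = v"
    using assms(1) unfolding connected_graph_def by blast
  then obtain ps where ps: "is_path V E ps" "hd ps = u" "last ps = v" by (metis walk_to_path)
  have "x \<notin> set ps"
  proof
    \<comment> \<open>an inner vertex of a path has two distinct neighbours on it, a leaf only one\<close>
    assume "x \<in> set ps"
    then obtain as bs where ps_eq: "ps = as @ x # bs" by (meson split_list)
    obtain a as' where "as = as' @ [a]" using ps u ps_eq by (cases as rule: rev_cases) auto
    moreover obtain b bs' where "bs = b # bs'" using ps v ps_eq by (cases bs) auto
    ultimately have "is_walk V E ((as' @ [a]) @ [x, b] @ bs')" and "a \<noteq> b"
      using ps ps_eq by (auto simp: is_path_def)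
    then have "a \<in> neighbours E x" and "b \<in> neighbours E x"
      using is_walk_append[of "as' @ [a]" "[x, b] @ bs'" V E] by (auto simp: neighbours_def insert_commute)
    then show False using \<open>a \<noteq> b\<close> assms(2) by simp
  qed
  then have "is_walk (V - {x}) {e\<in>E. x \<notin> e} ps"
    using ps(1) unfolding is_path_def is_walk_def by (auto dest: Suc_lessD nth_mem)
  then show "\<exists>ps. is_walk (V - {x}) {e\<in>E. x \<notin> e} ps \<and> hd ps = u \<and> last ps = v"
    using ps by blast
qed

lemma connected_neighbours_nonempty:
  assumes "connected_graph V E" and "2 \<le> card V" and "v \<in> V"
  shows "neighbours E v \<noteq> {}"
proof -
  have "\<not> V \<subseteq> {v}"
  proof
    assume "V \<subseteq> {v}"
    then have "card V \<le> 1" using card_mono[of "{v}" V] by simp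
    then show False using assms(2) by simp
  qed
  then obtain w where w: "w \<in> V" "w \<noteq> v" by blast
  then obtain ws where ws: "is_walk V E ws" "hd ws = v" "last ws = w"
    using assms(1,3) unfolding connected_graph_def by blast
  then obtain u us where "ws = v # u # us"
    using w by (cases ws; cases "tl ws") (auto simp: is_walk_def)
  then show ?thesis using ws(1) by (auto simp: neighbours_def)
qed

lemma tree_longest_path:
  assumes "is_tree V E" and "2 \<le> card V"
  obtains xs where "is_longest_path V E xs" and "2 \<le> length xs"
    and "card (neighbours E (hd xs)) = 1" and "card (neighbours E (last xs)) = 1"
proof -
  have sg: "simple_graph V E" and acyclic: "\<not> has_cycle V E" and fin: "finite V"
    using assms(1) by (auto simp: is_tree_def simple_graph_def)
  obtain v where "v \<in> V" using assms(2) by fastforce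
  moreover obtain u where "u \<in> neighbours E v"
    using connected_neighbours_nonempty[OF _ assms(2) \<open>v \<in> V\<close>] assms(1) by (auto simp: is_tree_def)
  moreover obtain xs where longest: "is_longest_path V E xs"
    using longest_path_exists[OF fin \<open>v \<in> V\<close>] by blast
  ultimately have len: "2 \<le> length xs"
    using longest_path_length_ge_2[of V E xs v u] simple_graph_edge_ends[OF sg] by (auto simp: neighbours_def)
  have leaf_start: "card (neighbours E (hd ys)) = 1" if ys: "is_longest_path V E ys" "2 \<le> length ys" for ys
  proof -
    obtain x y zs where "ys = x # y # zs" using ys(2) by (cases ys; cases "tl ys") auto
    then show ?thesis using longest_path_start_neighbours[OF sg acyclic] ys(1) by simp
  qed
  show thesis
    using that[OF longest len leaf_start[OF longest len]] leaf_start[of "rev xs"] longest len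
    by (simp add: hd_rev)
qed

lemma tree_remove_leaf:
  assumes "is_tree V E" and "neighbours E x = {y}"
  shows "is_tree (V - {x}) {e\<in>E. x \<notin> e}"
proof -
  have sg: "simple_graph V E" using assms(1) by (simp add: is_tree_def)
  have "y \<in> V - {x}" using assms(2) simple_graph_edge_ends[OF sg, of x y] by (auto simp: neighbours_def)
  moreover have "\<not> has_cycle (V - {x}) {e\<in>E. x \<notin> e}"
    using assms(1) is_walk_mono[of "V - {x}" "{e\<in>E. x \<notin> e}" _ V E]
    unfolding is_tree_def has_cycle_def by blast
  ultimately show ?thesis
    using assms connected_remove_leaf sg by (auto simp: is_tree_def simple_graph_def)
qed

lemma tree_card_edges:
  assumes "is_tree V E"
  shows "card E + 1 = card V"
  using assms
proof (induction "card V" arbitrary: V E rule: less_induct)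
  case less
  have sg: "simple_graph V E" and fin: "finite V" "finite E"
    using less.prems simple_graph_finite_edges by (auto simp: is_tree_def simple_graph_def)
  show ?case
  proof (cases "2 \<le> card V")
    case False
    moreover have "card V \<noteq> 0" using less.prems fin by (simp add: is_tree_def)
    ultimately have "card V = 1" by linarith
    then obtain a where "V = {a}" by (rule card_1_singletonE)
    then have "E = {}" using simple_graph_edgeE[OF sg] by blast
    then show ?thesis using \<open>card V = 1\<close> by simp
  next
    case True
    obtain xs where xs: "2 \<le> length xs" "is_longest_path V E xs" "card (neighbours E (hd xs)) = 1"
      using tree_longest_path[OF less.prems True] by blast
    define x where "x = hd xs"
    have "x \<in> set xs" using xs(1) unfolding x_def by (intro hd_in_set) auto
    then have "x \<in> V" using xs(2) by (auto simp: is_longest_path_def is_path_def is_walk_def)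
    obtain y where leaf: "neighbours E x = {y}" using xs(3) card_1_singletonE x_def by blast
    have "card (V - {x}) < card V" using \<open>x \<in> V\<close> fin by (meson card_Diff1_less)
    then have IH: "card {e\<in>E. x \<notin> e} + 1 = card (V - {x})"
      using less.hyps tree_remove_leaf[OF less.prems leaf] by blast
    have "E = insert {x, y} {e\<in>E. x \<notin> e}" and "{x, y} \<notin> {e\<in>E. x \<notin> e}"
      using edges_at_eq_image_neighbours[OF sg, of x] leaf by auto
    then have "card E = card {e\<in>E. x \<notin> e} + 1"
      using fin(2) by (metis card_insert_disjoint finite_insert Suc_eq_plus1)
    then show ?thesis using IH \<open>x \<in> V\<close> fin True by simp
  qed
qed

lemma tree_degree_ge_1:
  assumes "is_tree V E" and "2 \<le> card V" and "v \<in> V"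
  shows "1 \<le> degree E v"
proof -
  have sg: "simple_graph V E" using assms(1) by (simp add: is_tree_def)
  have "neighbours E v \<noteq> {}"
    using connected_neighbours_nonempty[OF _ assms(2,3)] assms(1) by (simp add: is_tree_def)
  then show ?thesis
    using finite_neighbours[OF sg] by (simp add: degree_eq_card_neighbours[OF sg] Suc_le_eq card_gt_0_iff)
qed

lemma tree_sum_degree: "is_tree V E \<Longrightarrow> (\<Sum>v\<in>V. degree E v) + 2 = 2 * card V"
  using sum_degree_eq_twice_card_edges tree_card_edges by (fastforce simp: is_tree_def)

section \<open>Trees of maximum degree 2 are paths\<close>

lemma neighbours_along_path:
  assumes sg: "simple_graph V E" and path: "is_path V E xs" and len: "2 \<le> length xs"
    and ends: "card (neighbours E (hd xs)) = 1" "card (neighbours E (last xs)) = 1"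
    and max_deg: "\<forall>v\<in>V. card (neighbours E v) \<le> 2" and i: "i < length xs"
  shows "neighbours E (xs ! i) = (!) xs ` {j. j < length xs \<and> (Suc j = i \<or> j = Suc i)}"
proof -
  define J where "J = {j. j < length xs \<and> (Suc j = i \<or> j = Suc i)}"
  have walk: "is_walk V E xs" and dist: "distinct xs" using path by (auto simp: is_path_def)
  have sub: "(!) xs ` J \<subseteq> neighbours E (xs ! i)"
    using is_walk_nth_edge[OF walk] i by (auto simp: J_def neighbours_def insert_commute)
  have card_J: "card ((!) xs ` J) = card J"
    using dist by (intro card_image inj_on_nth) (auto simp: J_def)
  have fin_J: "finite J" by (simp add: J_def)
  have "card (neighbours E (xs ! i)) \<le> card J"
  proof -
    consider "i = 0" | "i = length xs - 1" | "0 < i" "Suc i < length xs" using i by linarith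
    then show ?thesis
    proof cases
      case 1
      then have "1 \<in> J" using len by (simp add: J_def)
      moreover have "xs ! i = hd xs" using 1 len by (cases xs) auto
      ultimately show ?thesis using ends(1) fin_J by (auto simp: Suc_le_eq card_gt_0_iff)
    next
      case 2
      then have "i - 1 \<in> J" using len by (auto simp: J_def)
      moreover have "xs ! i = last xs" using 2 len by (subst last_conv_nth) auto
      ultimately show ?thesis using ends(2) fin_J by (auto simp: Suc_le_eq card_gt_0_iff)
    next
      case 3
      then have "{i - 1, Suc i} \<subseteq> J" by (auto simp: J_def)
      then have "card {i - 1, Suc i} \<le> card J" by (rule card_mono[OF fin_J])
      moreover have "xs ! i \<in> V" using walk i nth_mem by (auto simp: is_walk_def)
      then have "card (neighbours E (xs ! i)) \<le> 2" using max_deg by blast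
      ultimately show ?thesis using 3 by simp
    qed
  qed
  then show ?thesis
    using card_seteq[OF finite_neighbours[OF sg] sub] card_J by (simp add: J_def)
qed

lemma walk_in_neighbour_closed_set:
  assumes "is_walk V E ws" and "hd ws \<in> U" and "\<forall>u\<in>U. neighbours E u \<subseteq> U"
  shows "set ws \<subseteq> U"
  using assms
proof (induction ws rule: induct_list012)
  case (3 x y zs)
  then have "y \<in> U" by (auto simp: neighbours_def)
  then show ?case using 3 by simp
qed auto

lemma connected_neighbour_closed_eq:
  assumes "connected_graph V E" and "U \<subseteq> V" and "u \<in> U" and "\<forall>w\<in>U. neighbours E w \<subseteq> U"
  shows "U = V"
proof (intro equalityI subsetI)
  fix v assume "v \<in> V"
  then obtain ws where ws: "is_walk V E ws" "hd ws = u" "last ws = v"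
    using assms(1-3) unfolding connected_graph_def by blast
  then have "last ws \<in> set ws" by (auto simp: is_walk_def)
  then show "v \<in> U" using walk_in_neighbour_closed_set[OF ws(1)] ws(2,3) assms(3,4) by auto
qed (use assms(2) in auto)

lemma graph_iso_enumeration:
  assumes "distinct xs" and "set xs = V"
    and "\<And>i j. i < length xs \<Longrightarrow> j < length xs \<Longrightarrow> {xs ! i, xs ! j} \<in> E \<longleftrightarrow> {i, j} \<in> E'"
  shows "graph_iso V E {0..<length xs} E'"
proof -
  have bij: "bij_betw ((!) xs) {0..<length xs} V"
    using bij_betw_nth[OF assms(1)] assms(2) by (simp add: atLeast0LessThan)
  define f where "f = the_inv_into {0..<length xs} ((!) xs)"
  have f_bij: "bij_betw f V {0..<length xs}" unfolding f_def by (rule bij_betw_the_inv_into[OF bij])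
  have f_inv: "xs ! f v = v" if "v \<in> V" for v
    using f_the_inv_into_f_bij_betw[OF bij] that unfolding f_def by blast
  have "{v, w} \<in> E \<longleftrightarrow> {f v, f w} \<in> E'" if "v \<in> V" "w \<in> V" for v w
    using assms(3)[of "f v" "f w"] bij_betw_apply[OF f_bij] f_inv that by simp
  then show ?thesis unfolding graph_iso_def using f_bij by blast
qed

lemma in_path_E_iff: "{i, j} \<in> path_E n \<longleftrightarrow> (j = Suc i \<and> Suc i < n) \<or> (i = Suc j \<and> Suc j < n)"
  unfolding path_E_def by (auto simp: doubleton_eq_iff)

lemma graph_iso_path_if_max_degree_le_2:
  assumes sg: "simple_graph V E" and conn: "connected_graph V E"
    and path: "is_path V E xs" and len: "2 \<le> length xs"
    and ends: "card (neighbours E (hd xs)) = 1" "card (neighbours E (last xs)) = 1"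
    and max_deg: "\<forall>v\<in>V. card (neighbours E v) \<le> 2"
  shows "graph_iso V E (path_V (card V)) (path_E (card V))"
proof -
  note nbrs = neighbours_along_path[OF sg path len ends max_deg]
  have dist: "distinct xs" and set_xs: "set xs \<subseteq> V" using path by (auto simp: is_path_def is_walk_def)
  have "set xs = V"
  proof (rule connected_neighbour_closed_eq[OF conn set_xs])
    show "xs ! 0 \<in> set xs" using len by (intro nth_mem) linarith
    show "\<forall>w\<in>set xs. neighbours E w \<subseteq> set xs"
    proof
      fix w assume "w \<in> set xs"
      then obtain i where "i < length xs" "w = xs ! i" by (auto simp: in_set_conv_nth)
      then show "neighbours E w \<subseteq> set xs" using nbrs by auto
    qed
  qed
  moreover have "length xs = card V" using dist calculation distinct_card by fastforce
  moreover have "{xs ! i, xs ! j} \<in> E \<longleftrightarrow> {i, j} \<in> path_E (length xs)"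
    if "i < length xs" "j < length xs" for i j
    using nbrs[OF that(1)] that nth_eq_iff_index_eq[OF dist that(2)]
    by (auto simp: neighbours_def in_path_E_iff)
  ultimately show ?thesis using graph_iso_enumeration[OF dist] by (simp add: path_V_def)
qed

lemma card_neighbours_le_2_if_graph_iso_path:
  assumes sg: "simple_graph V E" and iso: "graph_iso V E (path_V n) (path_E n)" and v: "v \<in> V"
  shows "card (neighbours E v) \<le> 2"
proof -
  obtain f where f_bij: "bij_betw f V (path_V n)"
    and f_edge: "\<forall>x\<in>V. \<forall>y\<in>V. {x, y} \<in> E \<longleftrightarrow> {f x, f y} \<in> path_E n"
    using iso unfolding graph_iso_def by blast
  have "f w \<in> {f v - 1, Suc (f v)}" if "w \<in> neighbours E v" for w
  proof -
    have "w \<in> V" using that neighbours_subset[OF sg] by blast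
    then have "{f v, f w} \<in> path_E n" using f_edge v that by (simp add: neighbours_def)
    then show ?thesis by (auto simp: in_path_E_iff)
  qed
  then have "f ` neighbours E v \<subseteq> {f v - 1, Suc (f v)}" by blast
  moreover have "inj_on f (neighbours E v)"
    using f_bij neighbours_subset[OF sg] inj_on_subset by (metis bij_betw_def)
  ultimately have "card (neighbours E v) \<le> card {f v - 1, Suc (f v)}"
    using card_inj_on_le by blast
  also have "\<dots> \<le> 2" by (rule card_insert_le_m1) simp_all
  finally show ?thesis .
qed

lemma tree_graph_iso_path_iff:
  assumes tree: "is_tree V E" and two: "2 \<le> card V"
  shows "graph_iso V E (path_V (card V)) (path_E (card V)) \<longleftrightarrow> (\<forall>v\<in>V. degree E v \<le> 2)"
proof -
  have sg: "simple_graph V E" and conn: "connected_graph V E" using tree by (auto simp: is_tree_def)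
  obtain xs where "is_longest_path V E xs" "2 \<le> length xs"
    "card (neighbours E (hd xs)) = 1" "card (neighbours E (last xs)) = 1"
    using tree_longest_path[OF tree two] by blast
  then show ?thesis
    using graph_iso_path_if_max_degree_le_2[OF sg conn] card_neighbours_le_2_if_graph_iso_path[OF sg]
    by (auto simp: degree_eq_card_neighbours[OF sg] is_longest_path_def)
qed

section \<open>Degree sequences of trees\<close>

lemma card_leaves_ge_2:
  fixes d :: "'a \<Rightarrow> nat"
  assumes "finite V" and "\<forall>v\<in>V. 1 \<le> d v" and "(\<Sum>v\<in>V. d v) + 2 = 2 * card V"
  shows "2 \<le> card {v\<in>V. d v = 1}"
proof -
  let ?A = "{v\<in>V. d v = 1}" and ?B = "{v\<in>V. d v \<noteq> 1}"
  have V: "V = ?A \<union> ?B" "?A \<inter> ?B = {}" and fin: "finite ?A" "finite ?B" using assms(1) by auto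
  have "(\<Sum>v\<in>?B. 2) \<le> (\<Sum>v\<in>?B. d v)"
    using assms(2) by (intro sum_mono) (auto simp: le_neq_implies_less Suc_leI)
  moreover have "(\<Sum>v\<in>V. d v) = card ?A + (\<Sum>v\<in>?B. d v)"
    using sum.union_disjoint[OF fin V(2), of d] V(1) by simp
  moreover have "card V = card ?A + card ?B" using card_Un_disjoint[OF fin V(2)] V(1) by simp
  ultimately show ?thesis using assms(3) by simp
qed

lemma sum_abs_diff_split_at_ones:
  fixes d :: "'a \<Rightarrow> real"
  assumes "finite V" and "\<forall>v\<in>V. 1 \<le> d v"
  defines "A \<equiv> {v\<in>V. d v = 1}" and "B \<equiv> {v\<in>V. d v \<noteq> 1}"
  shows "(\<Sum>x\<in>V. \<Sum>y\<in>V. \<bar>d x - d y\<bar>)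
           = 2 * real (card A) * (\<Sum>v\<in>B. d v - 1) + (\<Sum>x\<in>B. \<Sum>y\<in>B. \<bar>d x - d y\<bar>)"
proof -
  have V: "V = A \<union> B" "A \<inter> B = {}" and fin: "finite A" "finite B"
    using assms(1) unfolding A_def B_def by auto
  have split: "sum g V = sum g A + sum g B" for g :: "'a \<Rightarrow> real"
    using sum.union_disjoint[OF fin V(2)] V(1) by simp
  have dA: "d x = 1" if "x \<in> A" for x using that by (simp add: A_def)
  have dB: "1 \<le> d x" if "x \<in> B" for x using that assms(2) by (simp add: B_def)
  have "(\<Sum>x\<in>V. \<Sum>y\<in>V. \<bar>d x - d y\<bar>)
        = (\<Sum>x\<in>A. \<Sum>y\<in>B. d y - 1) + (\<Sum>x\<in>B. \<Sum>y\<in>A. d x - 1) + (\<Sum>x\<in>B. \<Sum>y\<in>B. \<bar>d x - d y\<bar>)"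
    using dA dB by (simp add: split sum.distrib)
  also have "\<dots> = 2 * real (card A) * (\<Sum>v\<in>B. d v - 1) + (\<Sum>x\<in>B. \<Sum>y\<in>B. \<bar>d x - d y\<bar>)"
    by (simp add: sum_distrib_left mult.assoc)
  finally show ?thesis .
qed

lemma degree_sequence_sum_abs_diff_eq:
  fixes d :: "'a \<Rightarrow> nat"
  assumes fin: "finite V" and pos: "\<forall>v\<in>V. 1 \<le> d v" and sum: "(\<Sum>v\<in>V. d v) + 2 = 2 * card V"
  defines "A \<equiv> {v\<in>V. d v = 1}" and "B \<equiv> {v\<in>V. d v \<noteq> 1}"
  shows "(\<Sum>v\<in>B. real (d v) - 1) = real (card V) - 2"
    and "(\<Sum>x\<in>V. \<Sum>y\<in>V. \<bar>real (d x) - real (d y)\<bar>)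
           = 2 * real (card A) * (real (card V) - 2) + (\<Sum>x\<in>B. \<Sum>y\<in>B. \<bar>real (d x) - real (d y)\<bar>)"
proof -
  have V: "V = A \<union> B" "A \<inter> B = {}" and fin_AB: "finite A" "finite B"
    using fin by (auto simp: A_def B_def)
  have "(\<Sum>v\<in>V. real (d v)) + 2 = 2 * real (card V)" using arg_cong[OF sum, of real] by simp
  then have "(\<Sum>v\<in>V. real (d v) - 1) = real (card V) - 2" by (simp add: sum_subtractf)
  moreover have "(\<Sum>v\<in>A. real (d v) - 1) = 0" by (simp add: A_def)
  then have "(\<Sum>v\<in>V. real (d v) - 1) = (\<Sum>v\<in>B. real (d v) - 1)"
    using sum.union_disjoint[OF fin_AB V(2), of "\<lambda>v. real (d v) - 1"] V(1) by simp
  ultimately show sum_B: "(\<Sum>v\<in>B. real (d v) - 1) = real (card V) - 2" by simp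
  show "(\<Sum>x\<in>V. \<Sum>y\<in>V. \<bar>real (d x) - real (d y)\<bar>)
          = 2 * real (card A) * (real (card V) - 2) + (\<Sum>x\<in>B. \<Sum>y\<in>B. \<bar>real (d x) - real (d y)\<bar>)"
    using sum_abs_diff_split_at_ones[OF fin, of "\<lambda>v. real (d v)"] pos sum_B
    by (simp add: A_def B_def)
qed

lemma degree_sequence_sum_abs_diff:
  fixes d :: "'a \<Rightarrow> nat"
  assumes fin: "finite V" and pos: "\<forall>v\<in>V. 1 \<le> d v" and sum: "(\<Sum>v\<in>V. d v) + 2 = 2 * card V"
  defines "S \<equiv> \<Sum>x\<in>V. \<Sum>y\<in>V. \<bar>real (d x) - real (d y)\<bar>"
  shows "4 * real (card V) - 8 \<le> S"
    and "S = 4 * real (card V) - 8 \<longleftrightarrow> (\<forall>v\<in>V. d v \<le> 2)"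
proof -
  define A where "A = {v\<in>V. d v = 1}"
  define B where "B = {v\<in>V. d v \<noteq> 1}"
  define T where "T = (\<Sum>x\<in>B. \<Sum>y\<in>B. \<bar>real (d x) - real (d y)\<bar>)"
  let ?n = "real (card V)" and ?a = "real (card A)"
  have V: "V = A \<union> B" "A \<inter> B = {}" and fin_AB: "finite A" "finite B"
    using fin by (auto simp: A_def B_def)
  have card_V: "card V = card A + card B" using card_Un_disjoint[OF fin_AB V(2)] V(1) by simp
  have a2: "2 \<le> card A" using card_leaves_ge_2[OF fin pos sum] by (simp add: A_def)
  have dB: "2 \<le> d v" if "v \<in> B" for v using that pos by (fastforce simp: B_def)
  have sum_B: "(\<Sum>v\<in>B. real (d v) - 1) = ?n - 2"
    using degree_sequence_sum_abs_diff_eq(1)[OF fin pos sum] by (simp add: B_def)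
  have S: "S = 2 * ?a * (?n - 2) + T"
    using degree_sequence_sum_abs_diff_eq(2)[OF fin pos sum] by (simp add: S_def T_def A_def B_def)
  have T: "0 \<le> T" by (simp add: T_def sum_nonneg)
  have n2: "2 \<le> card V" using a2 card_V by simp
  show "4 * ?n - 8 \<le> S"
  proof -
    have "2 * 2 * (?n - 2) \<le> 2 * ?a * (?n - 2)" using a2 n2 by (intro mult_right_mono) auto
    then show ?thesis using S T by simp
  qed
  show "S = 4 * ?n - 8 \<longleftrightarrow> (\<forall>v\<in>V. d v \<le> 2)"
  proof
    assume "S = 4 * ?n - 8"
    then have "2 * (?a - 2) * (?n - 2) + T = 0" using S by (simp add: algebra_simps)
    moreover have "0 \<le> 2 * (?a - 2) * (?n - 2)" using a2 n2 by simp
    ultimately have "(?a - 2) * (?n - 2) = 0" using T by linarith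
    then have "card A = 2 \<or> card V = 2" by simp
    then have "card A = 2" using a2 card_V by linarith
    then have "(\<Sum>v\<in>B. real (d v) - 2) = 0" using sum_B card_V by (simp add: sum_subtractf)
    then have "\<forall>v\<in>B. real (d v) - 2 = 0"
      using dB by (subst (asm) sum_nonneg_eq_0_iff[OF fin_AB(2)]) auto
    then show "\<forall>v\<in>V. d v \<le> 2" by (auto simp: A_def B_def)
  next
    assume "\<forall>v\<in>V. d v \<le> 2"
    then have d2: "d v = 2" if "v \<in> B" for v using that dB by (force simp: B_def)
    then have "real (card B) = ?n - 2" using sum_B by simp
    then have "card A = 2" using card_V by simp
    moreover have "T = 0" using d2 by (simp add: T_def)
    ultimately show "S = 4 * ?n - 8" using S by simp
  qed
qed

theorem theorem5:
  fixes V :: "'a set" and E :: "'a set set" and n :: nat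
  assumes "n \<ge> 2" and "is_tree V E" and "card V = n"
  shows "irr_t V E \<ge> 2 * real n - 4
         \<and> (irr_t V E = 2 * real n - 4 \<longleftrightarrow> graph_iso V E (path_V n) (path_E n))"
proof -
  have "finite V" using assms(2) by (simp add: is_tree_def simple_graph_def)
  moreover have "\<forall>v\<in>V. 1 \<le> degree E v" using tree_degree_ge_1 assms by auto
  moreover have "(\<Sum>v\<in>V. degree E v) + 2 = 2 * card V" using tree_sum_degree[OF assms(2)] .
  ultimately have "4 * real n - 8 \<le> 2 * irr_t V E"
    and "2 * irr_t V E = 4 * real n - 8 \<longleftrightarrow> (\<forall>v\<in>V. degree E v \<le> 2)"
    using degree_sequence_sum_abs_diff[of V "degree E"] assms(3) by (simp_all add: irr_t_def)
  then show ?thesis using tree_graph_iso_path_iff assms by auto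
qed

end
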